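(* Let $\nu>0$ and $\lambda>0$. For $t>\lambda$ define $$K_1(t;\lambda)=\int_\lambda^t\frac{du}{u^{\nu+1}}\Big\{\frac{1}{(t+\lambda-u)^{\nu}}-\frac{1}{t^{\nu}}\Big\},\qquad K_2(t;\lambda)=\int_\lambda^t\frac{du}{u^{\nu+1}(t+\lambda-u)^{(2\nu)\wedge(\nu+1)}}.$$ Then (1) as $t\to\infty$, $$K_1(t;\lambda)=\frac{1}{(t+\lambda)^{2\nu}}\int_1^{t/\lambda}\frac{(v+1)^{2\nu}-v^{2\nu}}{v^{\nu+1}}\,dv+O(t^{-\nu-1});$$ (2) $\displaystyle\limsup_{t\to\infty}t^{(2\nu)\wedge(\nu+1)}K_2(t;\lambda)\le\frac{2}{\nu\lambda^{\nu}}$.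
   Context: $x\wedge y=\min\{x,y\}$. *)

theory Defs
  imports "HOL-Analysis.Analysis" "HOL-Library.Landau_Symbols"
begin

definition K1 :: "real \<Rightarrow> real \<Rightarrow> real \<Rightarrow> real" where
  "K1 nu lam t = integral {lam..t}
     (\<lambda>u. (1 / u powr (nu + 1)) * (1 / (t + lam - u) powr nu - 1 / t powr nu))"

definition K2 :: "real \<Rightarrow> real \<Rightarrow> real \<Rightarrow> real" where
  "K2 nu lam t = integral {lam..t}
     (\<lambda>u. 1 / (u powr (nu + 1) * (t + lam - u) powr (min (2 * nu) (nu + 1))))"

end

theory Submission
  imports Defs "HOL-Real_Asymp.Real_Asymp"
begin

(*
  Part (1). With a = t + \<lambda>, K1 is the integral of u^(-\<nu>-1) (a-u)^(-\<nu>) minus an elementary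
  integral. Folding [\<lambda>,t] about a/2 turns the first integrand into a (w (a-w))^(-\<nu>-1), and
  v = w/(a-w) maps [a/2,t] onto [1,t/\<lambda>] and this density onto a^(-2\<nu>) (v+1)^(2\<nu>) / v^(\<nu>+1).
  Subtracting the main term leaves the integral of v^(\<nu>-1), and everything else combines into
  (1 - (t/a)^(2\<nu>)) times a quantity of order t^(-\<nu>), where 1 - (t/a)^(2\<nu>) = O(1/t).

  Part (2). With m = min (2\<nu>) (\<nu>+1), cut [\<lambda>,t] at \<surd>t, a/2 and a - \<surd>t. Near u = \<lambda> the kernel is
  about t^(-m) u^(-\<nu>-1), near u = t (using m \<le> \<nu>+1) at most about t^(-m) (a-u)^(-\<nu>-1); each
  contributes \<lambda>^(-\<nu>)/\<nu> after scaling by t^m, while the middle pieces are O(t^(-\<nu>/2)).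
*)

lemma has_integral_powr:
  fixes l t q :: real
  assumes "0 < l" "l \<le> t" "q \<noteq> -1"
  shows "((\<lambda>u. u powr q) has_integral (t powr (q + 1) - l powr (q + 1)) / (q + 1)) {l..t}"
proof -
  have "((\<lambda>u. u powr q) has_integral (t powr (q + 1) / (q + 1) - l powr (q + 1) / (q + 1))) {l..t}"
  proof (rule fundamental_theorem_of_calculus[OF \<open>l \<le> t\<close>])
    fix x assume "x \<in> {l..t}"
    with assms have "x > 0" "q + 1 \<noteq> 0" by auto
    then show "((\<lambda>u. u powr (q + 1) / (q + 1)) has_vector_derivative x powr q) (at x within {l..t})"
      by (auto intro!: derivative_eq_intros simp: has_real_derivative_iff_has_vector_derivative[symmetric])
  qed
  then show ?thesis by (simp add: diff_divide_distrib)
qed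

lemma has_integral_powr_neg:
  fixes l t p :: real
  assumes "0 < l" "l \<le> t" "p \<noteq> 0"
  shows "((\<lambda>u. u powr (-(p + 1))) has_integral (l powr (-p) - t powr (-p)) / p) {l..t}"
  using has_integral_powr[of l t "-(p + 1)"] assms by (simp add: minus_divide_left)

lemma has_integral_reflect_shift:
  fixes f :: "real \<Rightarrow> 'a::real_normed_vector"
  assumes "(f has_integral I) {a..b}"
  shows "((\<lambda>x. f (c - x)) has_integral I) {c - b..c - a}"
proof -
  have "((\<lambda>x. f ((-1) *\<^sub>R x + c)) has_integral (1 / \<bar>-1\<bar> ^ DIM(real)) *\<^sub>R I)
          ((\<lambda>x. (1 / -1) *\<^sub>R x + - ((1 / -1) *\<^sub>R c)) ` cbox a b)"
    using assms by (intro has_integral_affinity) auto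
  moreover have "(\<lambda>x. (1 / -1) *\<^sub>R x + - ((1 / -1) *\<^sub>R c)) ` cbox a b = {c - b..c - a}"
    by (auto simp: image_iff intro!: bexI[where x = "c - _"])
  ultimately show ?thesis by simp
qed

lemma has_integral_symmetrize:
  fixes f :: "real \<Rightarrow> 'a::banach"
  assumes "f integrable_on {a..b}" "a \<le> b"
  shows "((\<lambda>x. f x + f (a + b - x)) has_integral integral {a..b} f) {(a + b) / 2..b}"
proof -
  let ?c = "(a + b) / 2"
  have left: "(f has_integral integral {a..?c} f) {a..?c}"
    and right: "(f has_integral integral {?c..b} f) {?c..b}"
    using assms integrable_subinterval_real[OF assms(1)] by (simp_all add: integrable_integral)
  have "a + b - ?c = ?c" "a + b - a = b" by (simp_all add: field_simps)
  with has_integral_reflect_shift[OF left, of "a + b"]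
  have "((\<lambda>x. f (a + b - x)) has_integral integral {a..?c} f) {?c..b}" by simp
  from has_integral_add[OF right this]
  have "((\<lambda>x. f x + f (a + b - x)) has_integral integral {a..?c} f + integral {?c..b} f) {?c..b}"
    by (simp only: add.commute[of "integral {?c..b} f"])
  also have "integral {a..?c} f + integral {?c..b} f = integral {a..b} f"
    using Henstock_Kurzweil_Integration.integral_combine[of a ?c b f] assms by simp
  finally show ?thesis .
qed

lemma kernel_reflection_sum_eq:
  fixes n x y :: real
  assumes "0 < x" "0 < y"
  shows "1 / (x powr (n + 1) * y powr n) + 1 / (y powr (n + 1) * x powr n)
    = (x + y) powr (-(2 * n)) * ((x + y) / y\<^sup>2) * ((x / y + 1) powr (2 * n) / (x / y) powr (n + 1))"
proof -
  have "1 / (x powr (n + 1) * y powr n) + 1 / (y powr (n + 1) * x powr n) = (x + y) / (x * y) powr (n + 1)"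
    using assms by (simp add: powr_add powr_mult field_simps)
  moreover have "x / y + 1 = (x + y) / y"
    using assms by (simp add: field_simps)
  moreover have "z powr (2 * n) = z powr n * z powr n" for z :: real
    by (simp add: powr_add[symmetric])
  ultimately show ?thesis
    using assms by (simp add: powr_divide powr_add powr_mult powr_minus field_simps power2_eq_square)
qed

lemma has_integral_ratio_substitution:
  fixes H :: "real \<Rightarrow> real" and l t :: real
  assumes "0 < l" "l < t" "continuous_on {1..t / l} H"
  shows "((\<lambda>w. (t + l) / (t + l - w)\<^sup>2 * H (w / (t + l - w))) has_integral integral {1..t / l} H)
           {(t + l) / 2..t}"
proof -
  define a where "a = t + l"
  define g where "g w = w / (a - w)" for w
  have g_ends: "g (a / 2) = 1" "g t = t / l"
    using assms by (auto simp: g_def a_def field_simps)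
  have "((\<lambda>w. (a / (a - w)\<^sup>2) *\<^sub>R H (g w)) has_integral integral {g (a / 2)..g t} H) {a / 2..t}"
  proof (rule has_integral_substitution[where c = 1 and d = "t / l" and g = g and f = H
        and g' = "\<lambda>w. a / (a - w)\<^sup>2"])
    show "g ` {a / 2..t} \<subseteq> {1..t / l}"
    proof (rule image_subsetI)
      fix w assume "w \<in> {a / 2..t}"
      then have "a / 2 \<le> w" "w \<le> t" "l \<le> a - w" by (auto simp: a_def)
      moreover have "w / (a - w) \<le> t / l"
        using calculation assms by (intro frac_le) auto
      ultimately show "g w \<in> {1..t / l}"
        using assms by (auto simp: g_def a_def field_simps)
    qed
    fix w assume "w \<in> {a / 2..t}"
    then have "a - w \<noteq> 0" using assms by (auto simp: a_def)
    then have "(g has_real_derivative (1 * (a - w) - w * (0 - 1)) / ((a - w) * (a - w))) (at w within {a / 2..t})"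
      unfolding g_def by (intro derivative_eq_intros) auto
    then show "(g has_real_derivative a / (a - w)\<^sup>2) (at w within {a / 2..t})"
      by (simp add: power2_eq_square)
  qed (use assms g_ends in \<open>simp_all add: a_def\<close>)
  then have "((\<lambda>w. (a / (a - w)\<^sup>2) *\<^sub>R H (g w)) has_integral integral {1..t / l} H) {a / 2..t}"
    by (simp only: g_ends)
  then show ?thesis
    by (simp add: g_def a_def)
qed

lemma has_integral_reflected_kernel:
  fixes n l t :: real
  assumes "0 < l" "l < t"
  shows "((\<lambda>u. 1 / (u powr (n + 1) * (t + l - u) powr n)) has_integral
          (t + l) powr (-(2 * n)) * integral {1..t / l} (\<lambda>v. (v + 1) powr (2 * n) / v powr (n + 1)))
         {l..t}"
proof -
  define a where "a = t + l"
  define f where "f u = 1 / (u powr (n + 1) * (a - u) powr n)" for u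
  define H where "H v = (v + 1) powr (2 * n) / v powr (n + 1)" for v :: real
  have "continuous_on {l..t} f"
    unfolding f_def a_def using assms by (intro continuous_intros) auto
  then have "((\<lambda>w. f w + f (l + t - w)) has_integral integral {l..t} f) {(l + t) / 2..t}"
    using assms by (intro has_integral_symmetrize integrable_continuous_interval) auto
  then have folded: "((\<lambda>w. f w + f (a - w)) has_integral integral {l..t} f) {a / 2..t}"
    by (simp add: a_def add.commute)
  have "continuous_on {1..t / l} H"
    unfolding H_def by (intro continuous_intros) auto
  from has_integral_mult_right[OF has_integral_ratio_substitution[OF assms this], of "a powr (-(2 * n))"]
  have "((\<lambda>w. a powr (-(2 * n)) * (a / (a - w)\<^sup>2 * H (w / (a - w))))
      has_integral a powr (-(2 * n)) * integral {1..t / l} H) {a / 2..t}"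
    by (simp add: a_def)
  moreover have "a powr (-(2 * n)) * (a / (a - w)\<^sup>2 * H (w / (a - w))) = f w + f (a - w)"
    if "w \<in> {a / 2..t}" for w
    using kernel_reflection_sum_eq[of w "a - w" n] that assms by (simp add: f_def H_def a_def)
  ultimately have "((\<lambda>w. f w + f (a - w)) has_integral a powr (-(2 * n)) * integral {1..t / l} H) {a / 2..t}"
    by (rule has_integral_eq[rotated])
  with folded have integral_eq: "integral {l..t} f = a powr (-(2 * n)) * integral {1..t / l} H"
    by (rule has_integral_unique)
  have "(f has_integral integral {l..t} f) {l..t}"
    using \<open>continuous_on {l..t} f\<close> by (intro integrable_integral integrable_continuous_interval)
  then have "(f has_integral a powr (-(2 * n)) * integral {1..t / l} H) {l..t}"
    by (simp only: integral_eq)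
  then show ?thesis
    unfolding f_def[abs_def] H_def[abs_def] a_def .
qed

lemma integral_substituted_kernel_split:
  fixes n T :: real
  assumes "0 < n" "1 \<le> T"
  shows "integral {1..T} (\<lambda>v. (v + 1) powr (2 * n) / v powr (n + 1))
    = integral {1..T} (\<lambda>v. ((v + 1) powr (2 * n) - v powr (2 * n)) / v powr (n + 1)) + (T powr n - 1) / n"
proof -
  define h where "h v = ((v + 1) powr (2 * n) - v powr (2 * n)) / v powr (n + 1)" for v :: real
  have "continuous_on {1..T} h"
    unfolding h_def by (intro continuous_intros) auto
  then have "(h has_integral integral {1..T} h) {1..T}"
    by (intro integrable_integral integrable_continuous_interval)
  moreover have "((\<lambda>v. v powr (n - 1)) has_integral (T powr n - 1) / n) {1..T}"
    using has_integral_powr[of 1 T "n - 1"] assms by simp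
  ultimately have "((\<lambda>v. h v + v powr (n - 1)) has_integral integral {1..T} h + (T powr n - 1) / n) {1..T}"
    by (rule has_integral_add)
  moreover have "h v + v powr (n - 1) = (v + 1) powr (2 * n) / v powr (n + 1)" if "v \<in> {1..T}" for v
  proof -
    have "v powr (2 * n) / v powr (n + 1) = v powr (n - 1)"
      using that by (simp add: powr_diff[symmetric])
    then show ?thesis by (simp add: h_def diff_divide_distrib)
  qed
  ultimately have "((\<lambda>v. (v + 1) powr (2 * n) / v powr (n + 1)) has_integral
      integral {1..T} h + (T powr n - 1) / n) {1..T}"
    by (rule has_integral_eq[rotated])
  then show ?thesis
    unfolding h_def[abs_def] by (rule integral_unique)
qed

lemma K1_eq:
  fixes n l t :: real
  assumes "0 < n" "0 < l" "l < t"
  shows "K1 n l t = (t + l) powr (-(2 * n)) *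
      (integral {1..t / l} (\<lambda>v. ((v + 1) powr (2 * n) - v powr (2 * n)) / v powr (n + 1)) + ((t / l) powr n - 1) / n)
    - 1 / t powr n * ((l powr (-n) - t powr (-n)) / n)"
proof -
  have "((\<lambda>u. 1 / (u powr (n + 1) * (t + l - u) powr n)) has_integral (t + l) powr (-(2 * n)) *
      (integral {1..t / l} (\<lambda>v. ((v + 1) powr (2 * n) - v powr (2 * n)) / v powr (n + 1)) + ((t / l) powr n - 1) / n))
      {l..t}"
    using has_integral_reflected_kernel[of l t n] integral_substituted_kernel_split[of n "t / l"] assms
    by simp
  moreover have "((\<lambda>u. u powr (-(n + 1))) has_integral (l powr (-n) - t powr (-n)) / n) {l..t}"
    using assms by (intro has_integral_powr_neg) auto
  ultimately have "((\<lambda>u. 1 / (u powr (n + 1) * (t + l - u) powr n) - 1 / t powr n * u powr (-(n + 1)))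
      has_integral (t + l) powr (-(2 * n)) *
      (integral {1..t / l} (\<lambda>v. ((v + 1) powr (2 * n) - v powr (2 * n)) / v powr (n + 1)) + ((t / l) powr n - 1) / n)
      - 1 / t powr n * ((l powr (-n) - t powr (-n)) / n)) {l..t}"
    by (intro has_integral_diff has_integral_mult_right)
  then show ?thesis
    unfolding K1_def
    by (intro integral_unique, rule has_integral_eq[rotated])
      (simp only: powr_minus_divide, simp add: right_diff_distrib)
qed

lemma K1_sub_main_term_eq:
  fixes n l t :: real
  assumes "0 < n" "0 < l" "l < t"
  shows "K1 n l t - 1 / (t + l) powr (2 * n) *
           integral {1..t / l} (\<lambda>v. ((v + 1) powr (2 * n) - v powr (2 * n)) / v powr (n + 1))
    = - (1 - (t / (t + l)) powr (2 * n)) * (l powr (-n) - t powr (-n)) / (n * t powr n)"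
proof -
  define a where "a = t + l"
  define T L A where "T = t powr n" and "L = l powr n" and "A = a powr n"
  have "0 < T" "0 < L" "0 < A" using assms by (simp_all add: T_def L_def A_def a_def)
  have powers: "a powr (-(2 * n)) = 1 / A\<^sup>2" "a powr (2 * n) = A\<^sup>2" "(t / a) powr (2 * n) = (T / A)\<^sup>2"
      "(t / l) powr n = T / L" "l powr (-n) = 1 / L" "t powr (-n) = 1 / T"
    using assms by (simp_all add: T_def L_def A_def a_def powr_divide powr_minus_divide power2_eq_square
        flip: powr_add)
  show ?thesis
    unfolding K1_eq[OF assms] a_def[symmetric] powers T_def[symmetric]
    using \<open>0 < T\<close> \<open>0 < L\<close> \<open>0 < A\<close> \<open>0 < n\<close> by (simp add: field_simps power2_eq_square)
qed

lemma one_minus_le_powr: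
  fixes x r :: real
  assumes "0 < x" "0 \<le> r"
  shows "1 - r * (1 / x - 1) \<le> x powr r"
proof -
  have "ln (1 / x) \<le> 1 / x - 1"
    using assms by (intro ln_le_minus_one) simp
  then have "1 - 1 / x \<le> ln x"
    using assms by (simp add: ln_div)
  then have "1 + r * (1 - 1 / x) \<le> 1 + r * ln x"
    using assms by (simp add: mult_left_mono)
  also have "\<dots> \<le> exp (r * ln x)"
    by (rule exp_ge_add_one_self)
  finally show ?thesis
    using assms by (simp add: powr_def algebra_simps)
qed

lemma K1_remainder_bound:
  fixes n l t :: real
  assumes "0 < n" "0 < l" "l < t"
  shows "\<bar>(1 - (t / (t + l)) powr (2 * n)) * (l powr (-n) - t powr (-n)) / (n * t powr n)\<bar>
    \<le> 2 * l powr (1 - n) * t powr (-n - 1)"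
proof -
  define D where "D = 1 - (t / (t + l)) powr (2 * n)"
  define P where "P = l powr (-n) - t powr (-n)"
  have "(t / (t + l)) powr (2 * n) \<le> 1 powr (2 * n)"
    using assms by (intro powr_mono2) auto
  moreover have "1 - 2 * n * (l / t) \<le> (t / (t + l)) powr (2 * n)"
    using one_minus_le_powr[of "t / (t + l)" "2 * n"] assms by (simp add: field_simps)
  ultimately have D: "0 \<le> D" "D \<le> 2 * n * (l / t)"
    unfolding D_def by simp_all
  have "t powr (-n) \<le> l powr (-n)"
    using assms by (intro powr_mono2') auto
  then have P: "0 \<le> P" "P \<le> l powr (-n)"
    unfolding P_def by simp_all
  have "\<bar>D * P / (n * t powr n)\<bar> = D * P / (n * t powr n)"
    using D P assms by simp
  also have "\<dots> \<le> (2 * n * (l / t)) * l powr (-n) / (n * t powr n)"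
    using D P assms by (intro divide_right_mono mult_mono) auto
  also have "\<dots> = 2 * (l / l powr n) * (1 / t powr (n + 1))"
    using assms by (simp add: powr_add powr_minus_divide field_simps)
  also have "\<dots> = 2 * l powr (1 - n) * t powr (-n - 1)"
    using assms powr_minus_divide[of t "n + 1"] by (simp add: powr_diff)
  finally show ?thesis
    unfolding D_def P_def .
qed

lemma powr_neg_le_of_ge:
  fixes s x p q :: real
  assumes "0 < s" "s \<le> x" "p \<le> q"
  shows "x powr (-q) \<le> s powr (p - q) * x powr (-p)"
proof -
  have "x powr (p - q) \<le> s powr (p - q)"
    using assms by (intro powr_mono2') auto
  then have "x powr (p - q) * x powr (-p) \<le> s powr (p - q) * x powr (-p)"
    by (rule mult_right_mono) simp
  then show ?thesis
    by (simp flip: powr_add)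
qed

lemma powr_neg_le_of_le:
  fixes x b m k :: real
  assumes "0 < x" "x \<le> b" "m \<le> k"
  shows "x powr (-m) \<le> b powr (k - m) * x powr (-k)"
proof -
  have "x powr (k - m) \<le> b powr (k - m)"
    using assms by (intro powr_mono2) auto
  then have "x powr (k - m) * x powr (-k) \<le> b powr (k - m) * x powr (-k)"
    by (rule mult_right_mono) simp
  then show ?thesis
    by (simp flip: powr_add)
qed

lemma kernel_le_split:
  fixes n m s a u :: real
  assumes "0 \<le> n" "0 \<le> m" "m \<le> n + 1" "0 < s" "s < a" "0 < u" "u < a"
  shows "u powr (-(n + 1)) * (a - u) powr (-m)
    \<le> (a - s) powr (-m) * u powr (-(n + 1))
      + (a / 2) powr (-m) * s powr (-(n / 2)) * (u powr (-(n / 2 + 1)) + (a - u) powr (-(n / 2 + 1)))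
      + (a - s) powr (-(n + 1)) * a powr (n + 1 - m) * (a - u) powr (-(n + 1))"
    (is "?k \<le> ?left + ?middle + ?right")
proof -
  have "0 \<le> ?left" "0 \<le> ?middle" "0 \<le> ?right" by simp_all
  moreover consider "u \<le> s" | "a - s \<le> u" | "s < u" "u \<le> a / 2" "u < a - s" | "a / 2 < u" "u < a - s"
    by linarith
  then have "?k \<le> ?left \<or> ?k \<le> ?middle \<or> ?k \<le> ?right"
  proof cases
    case 1
    then have "(a - u) powr (-m) \<le> (a - s) powr (-m)"
      using assms by (intro powr_mono2') auto
    then show ?thesis
      by (simp add: mult.commute mult_left_mono)
  next
    case 2
    then have "u powr (-(n + 1)) \<le> (a - s) powr (-(n + 1))"
      using assms by (intro powr_mono2') auto
    moreover have "(a - u) powr (-m) \<le> a powr (n + 1 - m) * (a - u) powr (-(n + 1))"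
      using assms by (intro powr_neg_le_of_le) auto
    ultimately have "?k \<le> (a - s) powr (-(n + 1)) * (a powr (n + 1 - m) * (a - u) powr (-(n + 1)))"
      by (intro mult_mono) auto
    then show ?thesis
      by (simp add: mult.assoc)
  next
    case 3
    then have "u powr (-(n + 1)) \<le> s powr (-(n / 2)) * u powr (-(n / 2 + 1))"
      using assms powr_neg_le_of_ge[of s u "n / 2 + 1" "n + 1"] by simp
    moreover have "(a - u) powr (-m) \<le> (a / 2) powr (-m)"
      using 3 assms by (intro powr_mono2') auto
    ultimately have "?k \<le> (s powr (-(n / 2)) * u powr (-(n / 2 + 1))) * (a / 2) powr (-m)"
      by (intro mult_mono) auto
    also have "\<dots> \<le> ?middle"
      by (simp add: algebra_simps)
    finally show ?thesis by simp
  next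
    case 4
    then have "u powr (-(n + 1)) \<le> (a / 2) powr (-(n + 1))"
      using assms by (intro powr_mono2') auto
    moreover have "(a - u) powr (-m) \<le> (a / 2) powr (n + 1 - m) * (a - u) powr (-(n + 1))"
      using 4 assms by (intro powr_neg_le_of_le) auto
    ultimately have "?k \<le> (a / 2) powr (-(n + 1)) * ((a / 2) powr (n + 1 - m) * (a - u) powr (-(n + 1)))"
      by (intro mult_mono) auto
    also have "\<dots> = (a / 2) powr (-m) * (a - u) powr (-(n + 1))"
      by (simp add: mult.assoc flip: powr_add)
    also have "(a - u) powr (-(n + 1)) \<le> s powr (-(n / 2)) * (a - u) powr (-(n / 2 + 1))"
      using 4 assms powr_neg_le_of_ge[of s "a - u" "n / 2 + 1" "n + 1"] by simp
    finally have "?k \<le> (a / 2) powr (-m) * (s powr (-(n / 2)) * (a - u) powr (-(n / 2 + 1)))"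
      by (simp add: mult_left_mono)
    also have "\<dots> \<le> ?middle"
      by (simp add: algebra_simps)
    finally show ?thesis by simp
  qed
  ultimately show ?thesis
    by linarith
qed

lemma integral_kernel_le:
  fixes n m l t s :: real
  assumes "0 < n" "0 \<le> m" "m \<le> n + 1" "0 < l" "l < t" "0 < s" "s < t + l"
  shows "integral {l..t} (\<lambda>u. 1 / (u powr (n + 1) * (t + l - u) powr m))
    \<le> ((t + l - s) powr (-m) + (t + l - s) powr (-(n + 1)) * (t + l) powr (n + 1 - m)) * l powr (-n) / n
      + 4 * ((t + l) / 2) powr (-m) * s powr (-(n / 2)) * l powr (-(n / 2)) / n"
proof -
  define a where "a = t + l"
  define J where "J p = (l powr (-p) - t powr (-p)) / p" for p :: real
  have J_le: "J p \<le> l powr (-p) / p" if "0 < p" for p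
    unfolding J_def using assms that by (simp add: divide_right_mono)
  have left: "((\<lambda>u. u powr (-(p + 1))) has_integral J p) {l..t}" if "0 < p" for p
    unfolding J_def using assms that by (intro has_integral_powr_neg) auto
  have right: "((\<lambda>u. (a - u) powr (-(p + 1))) has_integral J p) {l..t}" if "0 < p" for p
    using has_integral_reflect_shift[OF left[OF that], of a] by (simp add: a_def)
  define c where "c = (a / 2) powr (-m) * s powr (-(n / 2))"
  define d where "d = (a - s) powr (-(n + 1)) * a powr (n + 1 - m)"
  have "((\<lambda>u. 1 / (u powr (n + 1) * (a - u) powr m)) has_integral
      integral {l..t} (\<lambda>u. 1 / (u powr (n + 1) * (a - u) powr m))) {l..t}"
    using assms by (intro integrable_integral integrable_continuous_interval continuous_intros)
      (auto simp: a_def)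
  moreover have "((\<lambda>u. (a - s) powr (-m) * u powr (-(n + 1))
        + c * (u powr (-(n / 2 + 1)) + (a - u) powr (-(n / 2 + 1)))
        + d * (a - u) powr (-(n + 1)))
      has_integral (a - s) powr (-m) * J n + c * (J (n / 2) + J (n / 2)) + d * J n) {l..t}"
    using assms by (intro has_integral_add has_integral_mult_right left right) auto
  ultimately have "integral {l..t} (\<lambda>u. 1 / (u powr (n + 1) * (a - u) powr m))
      \<le> (a - s) powr (-m) * J n + c * (J (n / 2) + J (n / 2)) + d * J n"
  proof (rule has_integral_le)
    fix u assume "u \<in> {l..t}"
    then have "0 < u" "u < a" using assms by (auto simp: a_def)
    then show "1 / (u powr (n + 1) * (a - u) powr m) \<le> (a - s) powr (-m) * u powr (-(n + 1))
        + c * (u powr (-(n / 2 + 1)) + (a - u) powr (-(n / 2 + 1))) + d * (a - u) powr (-(n + 1))"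
    proof -
      have "1 / (u powr (n + 1) * (a - u) powr m) = u powr (-(n + 1)) * (a - u) powr (-m)"
        by (simp only: powr_minus_divide) simp
      also have "\<dots> \<le> (a - s) powr (-m) * u powr (-(n + 1))
          + c * (u powr (-(n / 2 + 1)) + (a - u) powr (-(n / 2 + 1))) + d * (a - u) powr (-(n + 1))"
        unfolding c_def d_def using assms \<open>0 < u\<close> \<open>u < a\<close>
        by (intro kernel_le_split[THEN order_trans]) (auto simp: a_def mult.assoc)
      finally show ?thesis .
    qed
  qed
  also have "\<dots> \<le> (a - s) powr (-m) * (l powr (-n) / n) + c * (l powr (-(n / 2)) / (n / 2) + l powr (-(n / 2)) / (n / 2))
      + d * (l powr (-n) / n)"
    using assms by (intro add_mono mult_left_mono J_le) (auto simp: c_def d_def)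
  also have "\<dots> = ((a - s) powr (-m) + d) * l powr (-n) / n + 4 * c * l powr (-(n / 2)) / n"
    using assms by (simp add: field_simps)
  finally show ?thesis
    by (simp add: a_def c_def d_def mult.assoc)
qed

lemma scaled_integral_kernel_le:
  fixes n m l t s :: real
  assumes "0 < n" "0 \<le> m" "m \<le> n + 1" "0 < l" "l < t" "0 < s" "s < t + l"
  shows "t powr m * integral {l..t} (\<lambda>u. 1 / (u powr (n + 1) * (t + l - u) powr m))
    \<le> (t / (t + l - s)) powr m * (1 + ((t + l) / (t + l - s)) powr (n + 1 - m)) * l powr (-n) / n
      + 4 * (2 * t / (t + l)) powr m * s powr (-(n / 2)) * l powr (-(n / 2)) / n"
proof -
  define a where "a = t + l"
  have "0 < a - s" "0 < t" using assms by (simp_all add: a_def)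
  have "(a - s) powr (-(n + 1)) = (a - s) powr (-m) / (a - s) powr (n + 1 - m)"
    using powr_diff[of "a - s" "-m" "n + 1 - m"] by simp
  then have first: "t powr m * ((a - s) powr (-m) + (a - s) powr (-(n + 1)) * a powr (n + 1 - m))
      = (t / (a - s)) powr m * (1 + (a / (a - s)) powr (n + 1 - m))"
    using \<open>0 < a - s\<close> \<open>0 < t\<close> by (simp add: powr_divide powr_minus_divide field_simps)
  have second: "t powr m * (a / 2) powr (-m) = (2 * t / a) powr m"
    using \<open>0 < t\<close> assms by (simp add: a_def powr_divide powr_minus_divide powr_mult)
  have "t powr m * integral {l..t} (\<lambda>u. 1 / (u powr (n + 1) * (a - u) powr m))
      \<le> t powr m * (((a - s) powr (-m) + (a - s) powr (-(n + 1)) * a powr (n + 1 - m)) * l powr (-n) / n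
        + 4 * (a / 2) powr (-m) * s powr (-(n / 2)) * l powr (-(n / 2)) / n)"
    using integral_kernel_le[OF assms] by (intro mult_left_mono) (simp_all add: a_def)
  also have "\<dots> = (t / (a - s)) powr m * (1 + (a / (a - s)) powr (n + 1 - m)) * l powr (-n) / n
      + 4 * (2 * t / a) powr m * s powr (-(n / 2)) * l powr (-(n / 2)) / n"
    unfolding first[symmetric] second[symmetric] by (simp add: algebra_simps)
  finally show ?thesis
    by (simp add: a_def)
qed

lemma K1_expansion:
  fixes nu lam :: real
  assumes "0 < nu" "0 < lam"
  shows "(\<lambda>t. K1 nu lam t - (1 / (t + lam) powr (2 * nu)) *
            integral {1..t / lam} (\<lambda>v. ((v + 1) powr (2 * nu) - v powr (2 * nu)) / v powr (nu + 1)))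
         \<in> O[at_top](\<lambda>t. t powr (- nu - 1))"
proof (intro bigoI[where c = "2 * lam powr (1 - nu)"] eventually_mono[OF eventually_gt_at_top[of lam]])
  fix t assume "lam < t"
  then show "norm (K1 nu lam t - (1 / (t + lam) powr (2 * nu)) *
            integral {1..t / lam} (\<lambda>v. ((v + 1) powr (2 * nu) - v powr (2 * nu)) / v powr (nu + 1)))
         \<le> 2 * lam powr (1 - nu) * norm (t powr (- nu - 1))"
    unfolding K1_sub_main_term_eq[OF assms \<open>lam < t\<close>]
    using K1_remainder_bound[OF assms \<open>lam < t\<close>] by (simp add: abs_mult abs_minus_commute)
qed

lemma K2_limsup_le:
  fixes nu lam :: real
  assumes "0 < nu" "0 < lam"
  shows "Limsup at_top (\<lambda>t. ereal (t powr (min (2 * nu) (nu + 1)) * K2 nu lam t))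
    \<le> ereal (2 / (nu * lam powr nu))"
proof -
  define m where "m = min (2 * nu) (nu + 1)"
  define B where "B t = (t / (t + lam - sqrt t)) powr m * (1 + ((t + lam) / (t + lam - sqrt t)) powr (nu + 1 - m))
      * lam powr (-nu) / nu + 4 * (2 * t / (t + lam)) powr m * sqrt t powr (-(nu / 2)) * lam powr (-(nu / 2)) / nu"
    for t
  have "eventually (\<lambda>t. ereal (t powr m * K2 nu lam t) \<le> ereal (B t)) at_top"
    using eventually_gt_at_top[of "max 1 lam"]
  proof eventually_elim
    case (elim t)
    then have "sqrt t * 1 \<le> sqrt t * sqrt t"
      by (intro mult_left_mono) auto
    with elim assms have "0 < sqrt t" "sqrt t < t + lam"
      by auto
    then show ?case
      using scaled_integral_kernel_le[of nu m lam t "sqrt t"] assms elim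
      by (simp add: K2_def B_def m_def)
  qed
  moreover have "(B \<longlongrightarrow> 1 powr m * (1 + 1 powr (nu + 1 - m)) * lam powr (-nu) / nu
      + 4 * 2 powr m * 0 * lam powr (-(nu / 2)) / nu) at_top"
  proof -
    have "((\<lambda>t. t / (t + lam - sqrt t)) \<longlongrightarrow> 1) at_top" "((\<lambda>t. (t + lam) / (t + lam - sqrt t)) \<longlongrightarrow> 1) at_top"
      "((\<lambda>t. 2 * t / (t + lam)) \<longlongrightarrow> 2) at_top" "filterlim sqrt at_top at_top"
      by real_asymp+
    then show ?thesis
      unfolding B_def using assms by (intro tendsto_intros tendsto_neg_powr) auto
  qed
  then have "(B \<longlongrightarrow> 2 / (nu * lam powr nu)) at_top"
    using assms by (simp add: powr_minus_divide mult.commute)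
  ultimately show ?thesis
    unfolding m_def[symmetric] by (metis Limsup_mono lim_imp_Limsup tendsto_ereal trivial_limit_at_top_linorder)
qed

theorem lemma3p4:
  fixes nu lam :: real
  assumes "nu > 0" and "lam > 0"
  shows "((\<lambda>t. K1 nu lam t
            - (1 / (t + lam) powr (2 * nu)) *
              integral {1..t / lam} (\<lambda>v. ((v + 1) powr (2 * nu) - v powr (2 * nu)) / v powr (nu + 1)))
          \<in> O[at_top](\<lambda>t. t powr (- nu - 1)))
         \<and> Limsup at_top (\<lambda>t. ereal (t powr (min (2 * nu) (nu + 1)) * K2 nu lam t))
          \<le> ereal (2 / (nu * lam powr nu))"
  using K1_expansion[OF assms] K2_limsup_le[OF assms] by blast

end
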